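(* Let $\mathcal{P}$ be a collection of cells. Let $a=(i,j)$, $b=(k,l)$ and $\delta=(m,n)$ with $i<m<k$ and $j<n<l$, and suppose $[a,b]$ is an inner interval of $\mathcal{P}$ (hence so is $[\alpha,\beta]$ with $\alpha=(i,n)$, $\beta=(m,l)$, whose upper left corner $\gamma$ equals the upper left corner $c=(i,l)$ of $[a,b]$). Put $d=(k,j)$, $h=(m,j)$, $r=(k,n)$. Let $<^{\mathsf{P}}$ be a $\mathsf{P}$-order on $V(\mathcal{P})$ and suppose that the leading monomials of $f_{a,b}$ and $f_{\alpha,\beta}$ with respect to $<^{\mathsf{P}}_{\mathrm{lex}}$ are not coprime. Then $S(f_{a,b},f_{\alpha,\beta})$ reduces to $0$ modulo $\mathcal{G}$ with respect to $<^{\mathsf{P}}_{\mathrm{lex}}$ if and only if one of the following holds: (1) $x_dx_\alpha x_\beta<^{\mathsf{P}}_{\mathrm{lex}}x_\delta x_ax_b$, and ($h,\alpha<^{\mathsf{P}}a$ or $h,\alpha<^{\mathsf{P}}\delta$); (2) $x_dx_\alpha x_\beta<^{\mathsf{P}}_{\mathrm{lex}}x_\delta x_ax_b$, and ($r,\beta<^{\mathsf{P}}\delta$ or $r,\beta<^{\mathsf{P}}b$); (3) $x_\delta x_ax_b<^{\mathsf{P}}_{\mathrm{lex}}x_dx_\alpha x_\beta$, and ($r,a<^{\mathsf{P}}\alpha$ or $r,a<^{\mathsf{P}}d$); (4) $x_\delta x_ax_b<^{\mathsf{P}}_{\mathrm{lex}}x_dx_\alpha x_\beta$, and ($h,b<^{\mathsf{P}}d$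 or $h,b<^{\mathsf{P}}\beta$).
   Context: For $a=(i,j), b=(k,l)\in\mathbb{Z}^2$ with $a\le b$ componentwise, the interval $[a,b]=\{(m,n)\in\mathbb{Z}^2: i\le m\le k,\ j\le n\le l\}$; it is proper if $i<k$ and $j<l$, in which case $a,b$ are its diagonal corners and $(i,l)$ (upper left), $(k,j)$ (lower right) its anti-diagonal corners. A cell is a proper interval $[v,v+(1,1)]$; its vertices are its four corners. A collection of cells $\mathcal{P}$ is a nonempty finite set of cells; $V(\mathcal{P})$ is the set of all vertices of its cells. A proper interval $[a,b]$ is an inner interval of $\mathcal{P}$ if every cell $[v,v+(1,1)]\subseteq[a,b]$ belongs to $\mathcal{P}$. Let $K$ be a field and $S=K[x_v: v\in V(\mathcal{P})]$. For an inner interval $[a,b]$ with upper left corner $c$ and lower right corner $d$, put $f_{a,b}=x_ax_b-x_cx_d$; $\mathcal{G}$ is the set of all such inner 2-minors of $\mathcal{P}$. A $\mathsf{P}$-order is a total order $<^{\mathsf{P}}$ on $V(\mathcal{P})$; $<^{\mathsf{P}}_{\mathrm{lex}}$ is the lexicographic monomial order on $S$ with $x_u<x_v\iff u<^{\mathsf{P}}v$. For vertices $u,v,w$, "$u,v<^{\mathsf{P}}w$" means $u<^{\mathsf{P}}w$ and $v<^{\mathsf{P}}w$. *)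

theory Defs
  imports "HOL-Library.Poly_Mapping"
begin

type_synonym vert = "int \<times> int"
type_synonym mon = "vert \<Rightarrow>\<^sub>0 nat"
type_synonym 'k pol = "mon \<Rightarrow>\<^sub>0 'k"

text \<open>A cell [v, v+(1,1)] is represented by its lower left corner v;
  a collection of cells is a finite nonempty set of such corners.\<close>

definition collection_of_cells :: "vert set \<Rightarrow> bool" where
  "collection_of_cells P \<longleftrightarrow> finite P \<and> P \<noteq> {}"

definition vertices :: "vert set \<Rightarrow> vert set" where
  "vertices P = {(fst v + e1, snd v + e2) | v e1 e2. v \<in> P \<and> e1 \<in> {0,1} \<and> e2 \<in> {0,1}}"

definition inner_interval :: "vert set \<Rightarrow> vert \<Rightarrow> vert \<Rightarrow> bool" where
  "inner_interval P a b \<longleftrightarrow> fst a < fst b \<and> snd a < snd b \<and>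
     (\<forall>v. fst a \<le> fst v \<and> fst v + 1 \<le> fst b \<and> snd a \<le> snd v \<and> snd v + 1 \<le> snd b \<longrightarrow> v \<in> P)"

definition P_order :: "vert set \<Rightarrow> (vert \<Rightarrow> vert \<Rightarrow> bool) \<Rightarrow> bool" where
  "P_order P lt \<longleftrightarrow>
     (\<forall>u\<in>vertices P. \<not> lt u u) \<and>
     (\<forall>u\<in>vertices P. \<forall>v\<in>vertices P. \<forall>w\<in>vertices P. lt u v \<longrightarrow> lt v w \<longrightarrow> lt u w) \<and>
     (\<forall>u\<in>vertices P. \<forall>v\<in>vertices P. u \<noteq> v \<longrightarrow> lt u v \<or> lt v u)"

definition var :: "vert \<Rightarrow> ('k::{zero,one}) pol" where
  "var v = Poly_Mapping.single (Poly_Mapping.single v 1) 1"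

definition mvar :: "vert \<Rightarrow> mon" where
  "mvar v = Poly_Mapping.single v 1"

definition in_S :: "vert set \<Rightarrow> ('k::zero) pol \<Rightarrow> bool" where
  "in_S P (f :: (_::zero) pol) \<longleftrightarrow> (\<forall>mo\<in>Poly_Mapping.keys f. Poly_Mapping.keys (mo::mon) \<subseteq> vertices P)"

text \<open>Lexicographic order on monomials induced by the variable order
  (x_u < x_v iff u < v): compare exponents at the largest variable where they differ.\<close>
definition lex_less :: "(vert \<Rightarrow> vert \<Rightarrow> bool) \<Rightarrow> mon \<Rightarrow> mon \<Rightarrow> bool" where
  "lex_less lt m1 m2 \<longleftrightarrow>
     (\<exists>v. Poly_Mapping.lookup m1 v < Poly_Mapping.lookup m2 v \<and> (\<forall>w. lt v w \<longrightarrow> Poly_Mapping.lookup m1 w = Poly_Mapping.lookup m2 w))"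

definition lex_le :: "(vert \<Rightarrow> vert \<Rightarrow> bool) \<Rightarrow> mon \<Rightarrow> mon \<Rightarrow> bool" where
  "lex_le lt m1 m2 \<longleftrightarrow> m1 = m2 \<or> lex_less lt m1 m2"

definition lead_mon :: "(vert \<Rightarrow> vert \<Rightarrow> bool) \<Rightarrow> ('k::zero) pol \<Rightarrow> mon" where
  "lead_mon lt f = (THE m. m \<in> Poly_Mapping.keys f \<and> (\<forall>m'\<in>Poly_Mapping.keys f. m' \<noteq> m \<longrightarrow> lex_less lt m' m))"

definition lead_coeff :: "(vert \<Rightarrow> vert \<Rightarrow> bool) \<Rightarrow> ('k::zero) pol \<Rightarrow> 'k" where
  "lead_coeff lt f = Poly_Mapping.lookup f (lead_mon lt f)"

definition mon_lcm :: "mon \<Rightarrow> mon \<Rightarrow> mon" where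
  "mon_lcm m1 m2 = Abs_poly_mapping (\<lambda>v. max (Poly_Mapping.lookup m1 v) (Poly_Mapping.lookup m2 v))"

definition coprime_mon :: "mon \<Rightarrow> mon \<Rightarrow> bool" where
  "coprime_mon m1 m2 \<longleftrightarrow> (\<forall>v. Poly_Mapping.lookup m1 v = 0 \<or> Poly_Mapping.lookup m2 v = 0)"

definition spoly :: "(vert \<Rightarrow> vert \<Rightarrow> bool) \<Rightarrow> ('k::field) pol \<Rightarrow> 'k pol \<Rightarrow> 'k pol" where
  "spoly lt f g =
     (let L = mon_lcm (lead_mon lt f) (lead_mon lt g) in
      Poly_Mapping.single (L - lead_mon lt f) (1 / lead_coeff lt f) * f
      - Poly_Mapping.single (L - lead_mon lt g) (1 / lead_coeff lt g) * g)"

text \<open>f_{a,b} = x_a x_b - x_c x_d with c the upper left, d the lower right corner.\<close>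
definition fmin :: "vert \<Rightarrow> vert \<Rightarrow> ('k::comm_ring_1) pol" where
  "fmin a b = var a * var b - var (fst a, snd b) * var (fst b, snd a)"

definition inner_minors :: "vert set \<Rightarrow> ('k::comm_ring_1) pol set" where
  "inner_minors P = {fmin a b | a b. inner_interval P a b}"

text \<open>f reduces to 0 modulo G (Herzog--Hibi): f has a standard expression
  f = \<Sum> q_g g with remainder 0, i.e. in(q_g g) \<le> in(f) whenever q_g g \<noteq> 0.\<close>
definition reduces_to_zero ::
  "vert set \<Rightarrow> (vert \<Rightarrow> vert \<Rightarrow> bool) \<Rightarrow> ('k::comm_ring_1) pol set \<Rightarrow> 'k pol \<Rightarrow> bool" where
  "reduces_to_zero P lt G f \<longleftrightarrow>
     (\<exists>H q. finite H \<and> H \<subseteq> G \<and> (\<forall>g\<in>H. in_S P (q g)) \<and>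
        f = (\<Sum>g\<in>H. q g * g) \<and>
        (\<forall>g\<in>H. q g * g \<noteq> 0 \<longrightarrow> lex_le lt (lead_mon lt (q g * g)) (lead_mon lt f)))"

end

theory Submission
  imports Defs
begin

text \<open>
  Since the leading monomials are not coprime, both minors are led by their antidiagonal terms
  x_c x_d and x_c x_\<delta>, so the S-polynomial is the binomial x_d x_\<alpha> x_\<beta> - x_\<delta> x_a x_b.
  Leading monomials are multiplicative, hence a standard expression of this binomial forces its
  leading monomial to be a multiple of the leading monomial of an inner minor. The corners of such a
  minor lie among the three variables of that monomial, which leaves only f_{a,\<delta>}, f_{\<delta>,b},
  f_{a,r} and f_{h,b} (the two given minors are excluded by their leading terms). Conversely
  S = -x_b f_{a,\<delta>} - x_\<alpha> f_{h,b} = -x_a f_{\<delta>,b} - x_\<beta> f_{a,r}, and such an expression is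
  standard exactly when the minor used is led by the appropriate term. In the lexicographic order
  the larger of two squarefree quadratic monomials with disjoint supports is the one containing the
  largest variable, which turns these conditions into comparisons of vertices.
\<close>

section \<open>P-orders and the lexicographic order\<close>

lemma P_order_irrefl: "P_order P lt \<Longrightarrow> u \<in> vertices P \<Longrightarrow> \<not> lt u u"
  by (simp add: P_order_def)

lemma P_order_trans:
  "P_order P lt \<Longrightarrow> u \<in> vertices P \<Longrightarrow> v \<in> vertices P \<Longrightarrow> w \<in> vertices P
    \<Longrightarrow> lt u v \<Longrightarrow> lt v w \<Longrightarrow> lt u w"
  unfolding P_order_def by blast

lemma P_order_total:
  "P_order P lt \<Longrightarrow> u \<in> vertices P \<Longrightarrow> v \<in> vertices P \<Longrightarrow> u \<noteq> v \<Longrightarrow> lt u v \<or> lt v u"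
  unfolding P_order_def by blast

lemma finite_has_maximal_wrt:
  assumes "finite A" "A \<noteq> {}"
    and "\<forall>x\<in>A. \<not> R x x" and "\<forall>x\<in>A. \<forall>y\<in>A. \<forall>z\<in>A. R x y \<longrightarrow> R y z \<longrightarrow> R x z"
  shows "\<exists>x\<in>A. \<forall>y\<in>A. \<not> R x y"
  using assms
proof (induction A rule: finite_ne_induct)
  case (singleton x)
  then show ?case by blast
next
  case (insert x F)
  note irrefl = insert.prems(1) and trans = insert.prems(2)
  have "\<forall>x\<in>F. \<not> R x x"
    using irrefl by blast
  moreover have "\<forall>x\<in>F. \<forall>y\<in>F. \<forall>z\<in>F. R x y \<longrightarrow> R y z \<longrightarrow> R x z"
    using trans by blast
  ultimately obtain y where y: "y \<in> F" "\<forall>z\<in>F. \<not> R y z"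
    using insert.IH by blast
  show ?case
  proof (cases "R y x")
    case True
    have "\<not> R x z" if "z \<in> insert x F" for z
    proof
      assume "R x z"
      then show False
        using that y True irrefl trans[rule_format, of y x z] by auto
    qed
    then show ?thesis by blast
  next
    case False
    then show ?thesis using y by blast
  qed
qed

definition mons :: "vert set \<Rightarrow> mon set" where
  "mons P = {m. Poly_Mapping.keys m \<subseteq> vertices P}"

lemma lookup_mvar: "Poly_Mapping.lookup (mvar v) w = (if v = w then 1 else 0)"
  by (simp add: mvar_def lookup_single when_def)

lemma mvar_in_mons [simp]: "mvar v \<in> mons P \<longleftrightarrow> v \<in> vertices P"
  by (simp add: mons_def mvar_def)

lemma add_in_mons [simp, intro]: "m1 \<in> mons P \<Longrightarrow> m2 \<in> mons P \<Longrightarrow> m1 + m2 \<in> mons P"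
  using keys_add[of m1 m2] by (auto simp: mons_def)

lemma in_S_iff_keys_mons: "in_S P f \<longleftrightarrow> Poly_Mapping.keys f \<subseteq> mons P"
  unfolding in_S_def mons_def by blast

lemma lex_less_irrefl [simp]: "\<not> lex_less lt m m"
  by (simp add: lex_less_def)

lemma lex_less_add_right: "lex_less lt m1 m2 \<Longrightarrow> lex_less lt (m1 + p) (m2 + p)"
  unfolding lex_less_def by (auto simp: lookup_add)

lemma lex_less_add_left: "lex_less lt m1 m2 \<Longrightarrow> lex_less lt (p + m1) (p + m2)"
  unfolding lex_less_def by (auto simp: lookup_add)

lemma lex_less_trans:
  assumes order: "P_order P lt" and mons: "m1 \<in> mons P" "m2 \<in> mons P" "m3 \<in> mons P"
    and "lex_less lt m1 m2" "lex_less lt m2 m3"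
  shows "lex_less lt m1 m3"
proof -
  obtain v where v: "Poly_Mapping.lookup m1 v < Poly_Mapping.lookup m2 v"
    "\<And>x. lt v x \<Longrightarrow> Poly_Mapping.lookup m1 x = Poly_Mapping.lookup m2 x"
    using \<open>lex_less lt m1 m2\<close> unfolding lex_less_def by blast
  obtain w where w: "Poly_Mapping.lookup m2 w < Poly_Mapping.lookup m3 w"
    "\<And>x. lt w x \<Longrightarrow> Poly_Mapping.lookup m2 x = Poly_Mapping.lookup m3 x"
    using \<open>lex_less lt m2 m3\<close> unfolding lex_less_def by blast
  have "v \<in> Poly_Mapping.keys m2" "w \<in> Poly_Mapping.keys m3"
    using v(1) w(1) by (simp_all add: in_keys_iff)
  then have vertices: "v \<in> vertices P" "w \<in> vertices P"
    using mons(2,3) by (auto simp: mons_def)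
  have above: "Poly_Mapping.lookup m1 x = Poly_Mapping.lookup m3 x"
    if "x \<in> vertices P \<Longrightarrow> lt v x \<and> lt w x" for x
  proof (cases "x \<in> vertices P")
    case True
    then show ?thesis using that v(2) w(2) by metis
  next
    case False
    \<comment> \<open>outside \<open>V(P)\<close> all three monomials vanish, so the order is irrelevant there\<close>
    then have "x \<notin> Poly_Mapping.keys m1" "x \<notin> Poly_Mapping.keys m3"
      using mons by (auto simp: mons_def)
    then show ?thesis by (simp add: in_keys_iff)
  qed
  consider "v = w" | "lt v w" | "lt w v"
    using P_order_total[OF order vertices] by blast
  then show ?thesis
  proof cases
    case 1
    show ?thesis unfolding lex_less_def
    proof (intro exI conjI allI impI)
      show "Poly_Mapping.lookup m1 v < Poly_Mapping.lookup m3 v"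
        using v(1) w(1) 1 by simp
      show "Poly_Mapping.lookup m1 x = Poly_Mapping.lookup m3 x" if "lt v x" for x
        using that 1 by (intro above) simp
    qed
  next
    case 2
    show ?thesis unfolding lex_less_def
    proof (intro exI conjI allI impI)
      show "Poly_Mapping.lookup m1 w < Poly_Mapping.lookup m3 w"
        using v(2)[OF 2] w(1) by simp
      show "Poly_Mapping.lookup m1 x = Poly_Mapping.lookup m3 x" if "lt w x" for x
        using that P_order_trans[OF order vertices _ 2] by (intro above) simp
    qed
  next
    case 3
    show ?thesis unfolding lex_less_def
    proof (intro exI conjI allI impI)
      show "Poly_Mapping.lookup m1 v < Poly_Mapping.lookup m3 v"
        using v(1) w(2)[OF 3] by simp
      show "Poly_Mapping.lookup m1 x = Poly_Mapping.lookup m3 x" if "lt v x" for x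
        using that P_order_trans[OF order vertices(2,1) _ 3] by (intro above) simp
    qed
  qed
qed

lemma lex_less_asym:
  assumes "P_order P lt" "m1 \<in> mons P" "m2 \<in> mons P" "lex_less lt m1 m2"
  shows "\<not> lex_less lt m2 m1"
proof
  assume "lex_less lt m2 m1"
  then have "lex_less lt m1 m1"
    by (rule lex_less_trans[OF assms(1,2,3,2) assms(4)])
  then show False
    by simp
qed

lemma lex_less_total:
  assumes order: "P_order P lt" and mons: "m1 \<in> mons P" "m2 \<in> mons P" and "m1 \<noteq> m2"
  shows "lex_less lt m1 m2 \<or> lex_less lt m2 m1"
proof -
  define D where "D = {v. Poly_Mapping.lookup m1 v \<noteq> Poly_Mapping.lookup m2 v}"
  have D_keys: "D \<subseteq> Poly_Mapping.keys m1 \<union> Poly_Mapping.keys m2"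
    by (auto simp: D_def in_keys_iff)
  then have "finite D"
    by (rule finite_subset) simp
  moreover have "D \<noteq> {}"
  proof
    assume "D = {}"
    then have "m1 = m2"
      by (intro poly_mapping_eqI) (auto simp: D_def)
    with \<open>m1 \<noteq> m2\<close> show False ..
  qed
  moreover have D_vertices: "D \<subseteq> vertices P"
    using D_keys mons by (auto simp: mons_def)
  then have "\<forall>x\<in>D. \<not> lt x x"
    using P_order_irrefl[OF order] by blast
  moreover have "\<forall>x\<in>D. \<forall>y\<in>D. \<forall>z\<in>D. lt x y \<longrightarrow> lt y z \<longrightarrow> lt x z"
  proof (intro ballI impI)
    fix x y z assume "x \<in> D" "y \<in> D" "z \<in> D" "lt x y" "lt y z"
    with D_vertices show "lt x z"
      using P_order_trans[OF order] by (meson subsetD)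
  qed
  ultimately obtain v where v: "v \<in> D" "\<forall>w\<in>D. \<not> lt v w"
    using finite_has_maximal_wrt[of D lt] by blast
  have above: "Poly_Mapping.lookup m1 w = Poly_Mapping.lookup m2 w" if "lt v w" for w
    using v(2) that unfolding D_def by blast
  have "Poly_Mapping.lookup m1 v \<noteq> Poly_Mapping.lookup m2 v"
    using v(1) by (simp add: D_def)
  then consider "Poly_Mapping.lookup m1 v < Poly_Mapping.lookup m2 v"
    | "Poly_Mapping.lookup m2 v < Poly_Mapping.lookup m1 v"
    by linarith
  then show ?thesis
  proof cases
    case 1
    have "lex_less lt m1 m2"
      unfolding lex_less_def by (intro exI[of _ v] conjI allI impI 1 above)
    then show ?thesis ..
  next
    case 2
    have "lex_less lt m2 m1"
      unfolding lex_less_def by (intro exI[of _ v] conjI allI impI 2 above[symmetric])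
    then show ?thesis ..
  qed
qed

lemma lex_less_add_mono:
  assumes order: "P_order P lt" and mons: "a \<in> mons P" "b \<in> mons P" "A \<in> mons P" "B \<in> mons P"
    and "lex_less lt a A" "lex_le lt b B"
  shows "lex_less lt (a + b) (A + B)"
proof -
  have "lex_less lt (a + b) (A + b)"
    using lex_less_add_right \<open>lex_less lt a A\<close> by blast
  moreover have "lex_le lt (A + b) (A + B)"
    using lex_less_add_left \<open>lex_le lt b B\<close> by (auto simp: lex_le_def)
  ultimately show ?thesis
    using lex_less_trans[OF order, of "a + b" "A + b" "A + B"] mons
    unfolding lex_le_def by (metis add_in_mons)
qed

lemma lex_le_antisym:
  assumes "P_order P lt" "m1 \<in> mons P" "m2 \<in> mons P" "lex_le lt m1 m2" "lex_le lt m2 m1"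
  shows "m1 = m2"
  using assms lex_less_asym[OF assms(1-3)] by (auto simp: lex_le_def)

section \<open>Leading monomials\<close>

lemma lead_mon_eqI:
  assumes order: "P_order P lt" and f: "in_S P f" and m: "m \<in> Poly_Mapping.keys f"
    and greatest: "\<forall>m'\<in>Poly_Mapping.keys f. m' \<noteq> m \<longrightarrow> lex_less lt m' m"
  shows "lead_mon lt f = m"
  unfolding lead_mon_def
proof (rule the_equality)
  show "m \<in> Poly_Mapping.keys f \<and> (\<forall>m'\<in>Poly_Mapping.keys f. m' \<noteq> m \<longrightarrow> lex_less lt m' m)"
    using m greatest by blast
next
  fix m2
  assume m2: "m2 \<in> Poly_Mapping.keys f \<and> (\<forall>m'\<in>Poly_Mapping.keys f. m' \<noteq> m2 \<longrightarrow> lex_less lt m' m2)"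
  show "m2 = m"
  proof (rule ccontr)
    assume "m2 \<noteq> m"
    then have "lex_less lt m2 m" "lex_less lt m m2"
      using greatest m m2 by auto
    moreover have "m \<in> mons P" "m2 \<in> mons P"
      using f m m2 by (auto simp: in_S_iff_keys_mons)
    ultimately show False
      using lex_less_asym[OF order] by blast
  qed
qed

lemma lead_mon_greatest:
  assumes order: "P_order P lt" and f: "in_S P f" and "f \<noteq> 0"
  shows "lead_mon lt f \<in> Poly_Mapping.keys f"
    and "\<forall>m\<in>Poly_Mapping.keys f. m \<noteq> lead_mon lt f \<longrightarrow> lex_less lt m (lead_mon lt f)"
proof -
  have keys_mons: "Poly_Mapping.keys f \<subseteq> mons P"
    using f by (simp add: in_S_iff_keys_mons)
  have trans: "\<forall>x\<in>Poly_Mapping.keys f. \<forall>y\<in>Poly_Mapping.keys f. \<forall>z\<in>Poly_Mapping.keys f.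
      lex_less lt x y \<longrightarrow> lex_less lt y z \<longrightarrow> lex_less lt x z"
    using keys_mons lex_less_trans[OF order] by (meson subsetD)
  have "Poly_Mapping.keys f \<noteq> {}"
    using \<open>f \<noteq> 0\<close> by simp
  from finite_has_maximal_wrt[OF finite_keys this _ trans]
  obtain m where m: "m \<in> Poly_Mapping.keys f" "\<forall>m'\<in>Poly_Mapping.keys f. \<not> lex_less lt m m'"
    by auto
  have greatest: "\<forall>m'\<in>Poly_Mapping.keys f. m' \<noteq> m \<longrightarrow> lex_less lt m' m"
    using m keys_mons lex_less_total[OF order] by (meson subsetD)
  show "lead_mon lt f \<in> Poly_Mapping.keys f"
    "\<forall>m\<in>Poly_Mapping.keys f. m \<noteq> lead_mon lt f \<longrightarrow> lex_less lt m (lead_mon lt f)"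
    using lead_mon_eqI[OF order f m(1) greatest] m(1) greatest by simp_all
qed

lemma lex_le_lead_mon:
  assumes "P_order P lt" "in_S P f" "m \<in> Poly_Mapping.keys f"
  shows "lex_le lt m (lead_mon lt f)"
proof -
  have "f \<noteq> 0"
    using assms(3) by auto
  then show ?thesis
    using lead_mon_greatest[OF assms(1,2)] assms(3) by (auto simp: lex_le_def)
qed

lemma in_S_monom: "X \<in> mons P \<Longrightarrow> in_S P (Poly_Mapping.single X c)"
  by (simp add: in_S_iff_keys_mons)

lemma in_S_add: "in_S P f \<Longrightarrow> in_S P g \<Longrightarrow> in_S P (f + g)"
  using keys_add[of f g] by (auto simp: in_S_iff_keys_mons)

lemma in_S_mult: "in_S P f \<Longrightarrow> in_S P g \<Longrightarrow> in_S P (f * g)"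
  unfolding in_S_iff_keys_mons using keys_mult[of f g] by blast

lemma lex_less_add_lead_mons:
  assumes order: "P_order P lt" and q: "in_S P q" "q \<noteq> 0" and g: "in_S P g" "g \<noteq> 0"
    and ab: "a \<in> Poly_Mapping.keys q" "b \<in> Poly_Mapping.keys g"
    and not_both: "a \<noteq> lead_mon lt q \<or> b \<noteq> lead_mon lt g"
  shows "lex_less lt (a + b) (lead_mon lt q + lead_mon lt g)"
proof (cases "a = lead_mon lt q")
  case True
  then show ?thesis
    using not_both ab(2) lead_mon_greatest(2)[OF order g] lex_less_add_left by blast
next
  case False
  then have "lex_less lt a (lead_mon lt q)"
    using ab(1) lead_mon_greatest(2)[OF order q] by blast
  moreover have "lex_le lt b (lead_mon lt g)"
    using lex_le_lead_mon[OF order g(1) ab(2)] .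
  moreover have "a \<in> mons P" "b \<in> mons P" "lead_mon lt q \<in> mons P" "lead_mon lt g \<in> mons P"
    using ab q g lead_mon_greatest(1)[OF order] by (auto simp: in_S_iff_keys_mons)
  ultimately show ?thesis
    using lex_less_add_mono[OF order] by blast
qed

lemma mult_eq_lead_term_add_lower:
  fixes q g :: "'k::comm_ring_1 pol"
  assumes order: "P_order P lt" and q: "in_S P q" "q \<noteq> 0" and g: "in_S P g" "g \<noteq> 0"
  defines "A \<equiv> lead_mon lt q" and "B \<equiv> lead_mon lt g"
  obtains R where "q * g = Poly_Mapping.single (A + B) (lead_coeff lt q * lead_coeff lt g) + R"
    and "\<forall>u\<in>Poly_Mapping.keys R. lex_less lt u (A + B)"
proof -
  define q' g' where "q' = q - Poly_Mapping.single A (lead_coeff lt q)"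
    and "g' = g - Poly_Mapping.single B (lead_coeff lt g)"
  have keys_q': "Poly_Mapping.keys q' \<subseteq> Poly_Mapping.keys q - {A}"
    by (auto simp: q'_def A_def lead_coeff_def in_keys_iff lookup_minus lookup_single when_def split: if_splits)
  have keys_g': "Poly_Mapping.keys g' \<subseteq> Poly_Mapping.keys g - {B}"
    by (auto simp: g'_def B_def lead_coeff_def in_keys_iff lookup_minus lookup_single when_def split: if_splits)
  define R where "R = Poly_Mapping.single A (lead_coeff lt q) * g' + q' * g"
  have "q * g = Poly_Mapping.single (A + B) (lead_coeff lt q * lead_coeff lt g) + R"
    unfolding R_def q'_def g'_def by (simp add: algebra_simps mult_single)
  moreover have "lex_less lt u (A + B)" if "u \<in> Poly_Mapping.keys R" for u
  proof -
    note below = lex_less_add_lead_mons[OF order q g, folded A_def B_def]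
    have "u \<in> Poly_Mapping.keys (Poly_Mapping.single A (lead_coeff lt q) * g') \<or> u \<in> Poly_Mapping.keys (q' * g)"
      using that keys_add[of "Poly_Mapping.single A (lead_coeff lt q) * g'" "q' * g"]
      unfolding R_def by blast
    then show ?thesis
    proof
      assume "u \<in> Poly_Mapping.keys (Poly_Mapping.single A (lead_coeff lt q) * g')"
      then obtain a b where "u = a + b" "a \<in> Poly_Mapping.keys (Poly_Mapping.single A (lead_coeff lt q))"
        "b \<in> Poly_Mapping.keys g'"
        using keys_mult[of "Poly_Mapping.single A (lead_coeff lt q)" g'] by blast
      moreover have "a = A"
        using \<open>a \<in> _\<close> by (simp split: if_splits)
      moreover have "b \<in> Poly_Mapping.keys g" "b \<noteq> B"
        using \<open>b \<in> _\<close> keys_g' by auto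
      ultimately show ?thesis
        using below[of A b] lead_mon_greatest(1)[OF order q, folded A_def] by simp
    next
      assume "u \<in> Poly_Mapping.keys (q' * g)"
      then obtain a b where "u = a + b" "a \<in> Poly_Mapping.keys q'" "b \<in> Poly_Mapping.keys g"
        using keys_mult[of q' g] by blast
      moreover have "a \<in> Poly_Mapping.keys q" "a \<noteq> A"
        using \<open>a \<in> _\<close> keys_q' by auto
      ultimately show ?thesis
        using below[of a b] by simp
    qed
  qed
  ultimately show ?thesis
    using that by blast
qed

lemma lead_mon_mult:
  fixes q g :: "'k::idom pol"
  assumes order: "P_order P lt" and q: "in_S P q" "q \<noteq> 0" and g: "in_S P g" "g \<noteq> 0"
  shows "lead_mon lt (q * g) = lead_mon lt q + lead_mon lt g"
proof -
  define A B where "A = lead_mon lt q" and "B = lead_mon lt g"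
  obtain R where split: "q * g = Poly_Mapping.single (A + B) (lead_coeff lt q * lead_coeff lt g) + R"
    and lower: "\<forall>u\<in>Poly_Mapping.keys R. lex_less lt u (A + B)"
    using mult_eq_lead_term_add_lower[OF order q g] unfolding A_def B_def by blast
  have "lead_coeff lt q \<noteq> 0" "lead_coeff lt g \<noteq> 0"
    using lead_mon_greatest(1)[OF order q] lead_mon_greatest(1)[OF order g]
    by (simp_all add: lead_coeff_def in_keys_iff)
  moreover have "A + B \<notin> Poly_Mapping.keys R"
    using lower lex_less_irrefl by blast
  ultimately have AB: "A + B \<in> Poly_Mapping.keys (q * g)"
    by (simp add: split lookup_add in_keys_iff)
  have "\<forall>u\<in>Poly_Mapping.keys (q * g). u \<noteq> A + B \<longrightarrow> lex_less lt u (A + B)"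
  proof (intro ballI impI)
    fix u assume "u \<in> Poly_Mapping.keys (q * g)" "u \<noteq> A + B"
    then have "u \<in> Poly_Mapping.keys R"
      using keys_add[of "Poly_Mapping.single (A + B) (lead_coeff lt q * lead_coeff lt g)" R]
      unfolding split by (auto split: if_splits)
    with lower show "lex_less lt u (A + B)"
      by blast
  qed
  with AB show ?thesis
    unfolding A_def B_def by (rule lead_mon_eqI[OF order in_S_mult[OF q(1) g(1)]])
qed

lemma lead_mon_uminus: "lead_mon lt (- f) = lead_mon lt f"
  by (simp add: lead_mon_def)

lemma keys_binomial:
  "A \<noteq> B \<Longrightarrow> Poly_Mapping.keys (Poly_Mapping.single A 1 - Poly_Mapping.single B (1::'k::comm_ring_1)) = {A, B}"
  by (auto simp: in_keys_iff lookup_minus lookup_single when_def split: if_splits)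

lemma lead_mon_binomial:
  assumes order: "P_order P lt" and mons: "A \<in> mons P" "B \<in> mons P" and "lex_less lt B A"
  shows "lead_mon lt (Poly_Mapping.single A 1 - Poly_Mapping.single B (1::'k::comm_ring_1)) = A"
proof -
  have "A \<noteq> B"
    using \<open>lex_less lt B A\<close> by auto
  note keys = keys_binomial[OF this, where 'k = 'k]
  show ?thesis
  proof (rule lead_mon_eqI[OF order])
    show "in_S P (Poly_Mapping.single A 1 - Poly_Mapping.single B (1::'k))"
      using mons by (simp add: in_S_iff_keys_mons keys)
  qed (use keys \<open>lex_less lt B A\<close> in auto)
qed

section \<open>Standard expressions\<close>

lemma reduces_to_zero_lead_mon_dvd:
  fixes f :: "'k::idom pol"
  assumes order: "P_order P lt" and "reduces_to_zero P lt G f"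
    and G: "\<forall>g\<in>G. in_S P g" and f: "in_S P f" "f \<noteq> 0"
  shows "\<exists>g\<in>G. \<exists>w. lead_mon lt f = w + lead_mon lt g"
proof -
  obtain H q where H: "H \<subseteq> G" "\<forall>g\<in>H. in_S P (q g)" "f = (\<Sum>g\<in>H. q g * g)"
    and bound: "\<forall>g\<in>H. q g * g \<noteq> 0 \<longrightarrow> lex_le lt (lead_mon lt (q g * g)) (lead_mon lt f)"
    using \<open>reduces_to_zero P lt G f\<close> unfolding reduces_to_zero_def by blast
  have "lead_mon lt f \<in> Poly_Mapping.keys f"
    using lead_mon_greatest(1)[OF order f] .
  then obtain g where g: "g \<in> H" "lead_mon lt f \<in> Poly_Mapping.keys (q g * g)"
    using keys_sum[of "\<lambda>g. q g * g" H] unfolding H(3) by blast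
  then have "q g \<noteq> 0" "g \<noteq> 0" "q g * g \<noteq> 0"
    by auto
  have qg: "in_S P (q g)" "in_S P g" "in_S P (q g * g)"
    using H G g(1) in_S_mult by blast+
  have "lex_le lt (lead_mon lt (q g * g)) (lead_mon lt f)"
    using bound g(1) \<open>q g * g \<noteq> 0\<close> by blast
  moreover have "lex_le lt (lead_mon lt f) (lead_mon lt (q g * g))"
    using lex_le_lead_mon[OF order qg(3) g(2)] .
  moreover have "lead_mon lt (q g * g) \<in> mons P" "lead_mon lt f \<in> mons P"
    using lead_mon_greatest(1)[OF order qg(3) \<open>q g * g \<noteq> 0\<close>] g(2) qg(3)
    by (auto simp: in_S_iff_keys_mons)
  ultimately have "lead_mon lt f = lead_mon lt (q g * g)"
    using lex_le_antisym[OF order] by blast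
  also have "\<dots> = lead_mon lt (q g) + lead_mon lt g"
    using lead_mon_mult[OF order qg(1) \<open>q g \<noteq> 0\<close> qg(2) \<open>g \<noteq> 0\<close>] .
  finally show ?thesis
    using H(1) g(1) by blast
qed

lemma reduces_to_zero_pairI:
  fixes f :: "'k::comm_ring_1 pol"
  assumes order: "P_order P lt" and G: "g1 \<in> G" "g2 \<in> G"
    and S: "in_S P q1" "in_S P q2" "in_S P g1" "in_S P g2"
    and f: "f = q1 * g1 + q2 * g2"
    and bound: "\<forall>u\<in>Poly_Mapping.keys (q1 * g1) \<union> Poly_Mapping.keys (q2 * g2). lex_le lt u (lead_mon lt f)"
  shows "reduces_to_zero P lt G f"
proof -
  have lead_bound: "lex_le lt (lead_mon lt h) (lead_mon lt f)"
    if "in_S P h" "h \<noteq> 0" "Poly_Mapping.keys h \<subseteq> Poly_Mapping.keys (q1 * g1) \<union> Poly_Mapping.keys (q2 * g2)"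
    for h :: "'k pol"
    using lead_mon_greatest(1)[OF order that(1,2)] that(3) bound by blast
  show ?thesis
  proof (cases "g1 = g2")
    case True
    have "Poly_Mapping.keys ((q1 + q2) * g1) \<subseteq> Poly_Mapping.keys (q1 * g1) \<union> Poly_Mapping.keys (q2 * g2)"
      using keys_add[of "q1 * g1" "q2 * g1"] True by (simp add: distrib_right)
    then have "(q1 + q2) * g1 \<noteq> 0 \<longrightarrow> lex_le lt (lead_mon lt ((q1 + q2) * g1)) (lead_mon lt f)"
      using lead_bound in_S_mult[OF in_S_add[OF S(1,2)] S(3)] by blast
    moreover have "f = (q1 + q2) * g1"
      unfolding f True by (simp add: distrib_right)
    ultimately show ?thesis
      unfolding reduces_to_zero_def using G(1) in_S_add[OF S(1,2)]
      by (intro exI[of _ "{g1}"] exI[of _ "\<lambda>_. q1 + q2"]) simp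
  next
    case False
    have "lex_le lt (lead_mon lt (q1 * g1)) (lead_mon lt f)" if "q1 * g1 \<noteq> 0"
      using lead_bound[OF in_S_mult[OF S(1,3)] that] by blast
    moreover have "lex_le lt (lead_mon lt (q2 * g2)) (lead_mon lt f)" if "q2 * g2 \<noteq> 0"
      using lead_bound[OF in_S_mult[OF S(2,4)] that] by blast
    ultimately show ?thesis
      unfolding reduces_to_zero_def using G S False f
      by (intro exI[of _ "{g1, g2}"] exI[of _ "\<lambda>g. if g = g1 then q1 else q2"]) simp
  qed
qed

section \<open>Inner 2-minors\<close>

lemma fmin_eq:
  "fmin a b = Poly_Mapping.single (mvar a + mvar b) 1
     - Poly_Mapping.single (mvar (fst a, snd b) + mvar (fst b, snd a)) (1::'k::comm_ring_1)"
  by (simp add: fmin_def var_def mvar_def mult_single)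

lemma mvar_pair_neq:
  assumes "x \<noteq> s" "x \<noteq> t"
  shows "mvar x + mvar y \<noteq> mvar s + mvar t"
proof
  assume "mvar x + mvar y = mvar s + mvar t"
  then have "Poly_Mapping.lookup (mvar x + mvar y) x = Poly_Mapping.lookup (mvar s + mvar t) x"
    by simp
  with assms show False
    by (simp add: lookup_add lookup_mvar)
qed

lemma keys_fmin:
  assumes "x1 < x2" "y1 < y2"
  shows "Poly_Mapping.keys (fmin (x1, y1) (x2, y2) :: 'k::comm_ring_1 pol) =
    {mvar (x1, y1) + mvar (x2, y2), mvar (x1, y2) + mvar (x2, y1)}"
  using assms by (simp add: fmin_eq keys_binomial mvar_pair_neq)

lemma inner_interval_vertices:
  assumes inner: "inner_interval P (i, j) (k, l)" and "i \<le> x" "x \<le> k" "j \<le> y" "y \<le> l"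
  shows "(x, y) \<in> vertices P"
proof -
  have cells: "(a, b) \<in> P" if "i \<le> a" "a + 1 \<le> k" "j \<le> b" "b + 1 \<le> l" for a b
    using inner that unfolding inner_interval_def by auto
  define v where "v = (min x (k - 1), min y (l - 1))"
  have "i < k" "j < l"
    using inner by (auto simp: inner_interval_def)
  then have "v \<in> P"
    unfolding v_def using assms(2-5) by (intro cells) auto
  moreover have "x - fst v \<in> {0, 1}" "y - snd v \<in> {0, 1}"
    using \<open>i < k\<close> \<open>j < l\<close> assms(2-5) unfolding v_def by auto
  moreover have "(x, y) = (fst v + (x - fst v), snd v + (y - snd v))"
    by simp
  ultimately show ?thesis
    unfolding vertices_def by blast
qed

lemma inner_interval_mono:
  "inner_interval P (i, j) (k, l) \<Longrightarrow> i \<le> x1 \<Longrightarrow> x1 < x2 \<Longrightarrow> x2 \<le> k \<Longrightarrow> j \<le> y1 \<Longrightarrow> y1 < y2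
    \<Longrightarrow> y2 \<le> l \<Longrightarrow> inner_interval P (x1, y1) (x2, y2)"
  unfolding inner_interval_def by auto

lemma in_S_fmin:
  assumes "inner_interval P a b"
  shows "in_S P (fmin a b :: 'k::comm_ring_1 pol)"
proof -
  obtain x1 y1 x2 y2 where ab: "a = (x1, y1)" "b = (x2, y2)"
    by (cases a, cases b) auto
  note assms = assms[unfolded ab]
  have "x1 < x2" "y1 < y2"
    using assms by (auto simp: inner_interval_def)
  moreover have "(x, y) \<in> vertices P" if "x \<in> {x1, x2}" "y \<in> {y1, y2}" for x y
    using that \<open>x1 < x2\<close> \<open>y1 < y2\<close> inner_interval_vertices[OF assms] by auto
  ultimately show ?thesis
    unfolding ab by (simp add: in_S_iff_keys_mons keys_fmin)
qed

lemma fmin_in_inner_minors: "inner_interval P a b \<Longrightarrow> fmin a b \<in> inner_minors P"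
  unfolding inner_minors_def by blast

lemma lead_mon_fmin_cases:
  assumes order: "P_order P lt" and inner: "inner_interval P (x1, y1) (x2, y2)"
  defines "D \<equiv> mvar (x1, y1) + mvar (x2, y2)" and "C \<equiv> mvar (x1, y2) + mvar (x2, y1)"
  shows "(lead_mon lt (fmin (x1, y1) (x2, y2) :: 'k::comm_ring_1 pol) = D \<and> lex_less lt C D)
    \<or> (lead_mon lt (fmin (x1, y1) (x2, y2) :: 'k pol) = C \<and> lex_less lt D C)"
proof -
  have "x1 < x2" "y1 < y2"
    using inner by (auto simp: inner_interval_def)
  then have keys: "Poly_Mapping.keys (fmin (x1, y1) (x2, y2) :: 'k pol) = {D, C}" and "D \<noteq> C"
    unfolding D_def C_def by (simp_all add: keys_fmin mvar_pair_neq)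
  then have "fmin (x1, y1) (x2, y2) \<noteq> (0 :: 'k pol)"
    by auto
  note lead = lead_mon_greatest[OF order in_S_fmin[OF inner] this, unfolded keys]
  from lead(1) show ?thesis
  proof
    assume "lead_mon lt (fmin (x1, y1) (x2, y2) :: 'k pol) = D"
    with lead(2) \<open>D \<noteq> C\<close> show ?thesis
      by simp
  next
    assume "lead_mon lt (fmin (x1, y1) (x2, y2) :: 'k pol) \<in> {C}"
    with lead(2) \<open>D \<noteq> C\<close> show ?thesis
      by simp
  qed
qed

lemma lead_coeff_fmin_antidiagonal:
  assumes "x1 < x2" "y1 < y2"
    and "lead_mon lt (fmin (x1, y1) (x2, y2) :: 'k::comm_ring_1 pol) = mvar (x1, y2) + mvar (x2, y1)"
  shows "lead_coeff lt (fmin (x1, y1) (x2, y2) :: 'k pol) = -1"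
proof -
  have "mvar (x1, y1) + mvar (x2, y2) \<noteq> mvar (x1, y2) + mvar (x2, y1)"
    using assms(1,2) by (intro mvar_pair_neq) auto
  then show ?thesis
    unfolding lead_coeff_def assms(3) by (simp add: fmin_eq lookup_minus lookup_single)
qed

lemma reduces_to_zero_inner_minors_lead_mon:
  fixes f :: "'k::idom pol"
  assumes order: "P_order P lt" and "reduces_to_zero P lt (inner_minors P) f"
    and f: "in_S P f" "f \<noteq> 0"
  obtains x1 y1 x2 y2 w where "x1 < x2" "y1 < y2"
      "lead_mon lt (fmin (x1, y1) (x2, y2) :: 'k pol) = mvar (x1, y1) + mvar (x2, y2)"
      "lex_less lt (mvar (x1, y2) + mvar (x2, y1)) (mvar (x1, y1) + mvar (x2, y2))"
      "lead_mon lt f = w + (mvar (x1, y1) + mvar (x2, y2))"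
  | x1 y1 x2 y2 w where "x1 < x2" "y1 < y2"
      "lex_less lt (mvar (x1, y1) + mvar (x2, y2)) (mvar (x1, y2) + mvar (x2, y1))"
      "lead_mon lt f = w + (mvar (x1, y2) + mvar (x2, y1))"
proof -
  have "\<forall>g\<in>inner_minors P. in_S P (g :: 'k pol)"
    unfolding inner_minors_def using in_S_fmin by auto
  from reduces_to_zero_lead_mon_dvd[OF order assms(2) this f]
  obtain g :: "'k pol" and w where "g \<in> inner_minors P" and f_lead: "lead_mon lt f = w + lead_mon lt g"
    by blast
  then obtain x1 y1 x2 y2 where inner: "inner_interval P (x1, y1) (x2, y2)"
    and g: "g = fmin (x1, y1) (x2, y2)"
    unfolding inner_minors_def by auto
  have "x1 < x2" "y1 < y2"
    using inner by (auto simp: inner_interval_def)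
  from lead_mon_fmin_cases[OF order inner, where 'k = 'k] show ?thesis
  proof (elim disjE conjE)
    assume "lead_mon lt (fmin (x1, y1) (x2, y2) :: 'k pol) = mvar (x1, y1) + mvar (x2, y2)"
      "lex_less lt (mvar (x1, y2) + mvar (x2, y1)) (mvar (x1, y1) + mvar (x2, y2))"
    with f_lead g show ?thesis
      using that(1)[OF \<open>x1 < x2\<close> \<open>y1 < y2\<close>] by simp
  next
    assume "lead_mon lt (fmin (x1, y1) (x2, y2) :: 'k pol) = mvar (x1, y2) + mvar (x2, y1)"
      "lex_less lt (mvar (x1, y1) + mvar (x2, y2)) (mvar (x1, y2) + mvar (x2, y1))"
    with f_lead g show ?thesis
      using that(2)[OF \<open>x1 < x2\<close> \<open>y1 < y2\<close>] by simp
  qed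
qed

lemma lex_less_mvar_pair_if_greatest:
  assumes order: "P_order P lt"
    and vertices: "p \<in> vertices P" "q \<in> vertices P" "s \<in> vertices P"
    and distinct: "distinct [p, q, s, t]" and "lt p s" "lt q s" "\<not> lt s t"
  shows "lex_less lt (mvar p + mvar q) (mvar s + mvar t)"
  unfolding lex_less_def
proof (intro exI[of _ s] conjI allI impI)
  show "Poly_Mapping.lookup (mvar p + mvar q) s < Poly_Mapping.lookup (mvar s + mvar t) s"
    using distinct by (auto simp: lookup_add lookup_mvar)
  fix w
  assume "lt s w"
  then have "w \<noteq> p" "w \<noteq> q" "w \<noteq> s" "w \<noteq> t"
    using \<open>lt p s\<close> \<open>lt q s\<close> \<open>\<not> lt s t\<close> P_order_irrefl[OF order] P_order_trans[OF order] vertices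
    by metis+
  then show "Poly_Mapping.lookup (mvar p + mvar q) w = Poly_Mapping.lookup (mvar s + mvar t) w"
    by (simp add: lookup_add lookup_mvar)
qed

lemma lex_less_mvar_pair_iff:
  assumes order: "P_order P lt"
    and vertices: "p \<in> vertices P" "q \<in> vertices P" "s \<in> vertices P" "t \<in> vertices P"
    and distinct: "distinct [p, q, s, t]"
  shows "lex_less lt (mvar p + mvar q) (mvar s + mvar t) \<longleftrightarrow> (lt p s \<and> lt q s) \<or> (lt p t \<and> lt q t)"
proof
  assume "lex_less lt (mvar p + mvar q) (mvar s + mvar t)"
  then obtain v where v: "Poly_Mapping.lookup (mvar p + mvar q) v < Poly_Mapping.lookup (mvar s + mvar t) v"
    and above: "\<And>w. lt v w \<Longrightarrow> Poly_Mapping.lookup (mvar p + mvar q) w = Poly_Mapping.lookup (mvar s + mvar t) w"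
    unfolding lex_less_def by blast
  have "v = s \<or> v = t" "v \<noteq> p" "v \<noteq> q"
    using v distinct by (auto simp: lookup_add lookup_mvar split: if_splits)
  moreover have "\<not> lt v p" "\<not> lt v q"
    using above[of p] above[of q] distinct by (auto simp: lookup_add lookup_mvar)
  ultimately show "(lt p s \<and> lt q s) \<or> (lt p t \<and> lt q t)"
    using P_order_total[OF order] vertices by metis
next
  assume pq_below: "(lt p s \<and> lt q s) \<or> (lt p t \<and> lt q t)"
  show "lex_less lt (mvar p + mvar q) (mvar s + mvar t)"
  proof (cases "lt s t")
    case True
    then have "lt p t" "lt q t"
      using pq_below P_order_trans[OF order] vertices by metis+
    moreover have "\<not> lt t s"
      using True P_order_irrefl[OF order] P_order_trans[OF order] vertices by metis
    ultimately have "lex_less lt (mvar p + mvar q) (mvar t + mvar s)"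
      using distinct by (intro lex_less_mvar_pair_if_greatest[OF order vertices(1,2,4)]) auto
    then show ?thesis
      by (simp add: add.commute)
  next
    case False
    then have "lt t s"
      using P_order_total[OF order vertices(3,4)] distinct by auto
    then have "lt p s" "lt q s"
      using pq_below P_order_trans[OF order] vertices by metis+
    then show ?thesis
      using False distinct by (intro lex_less_mvar_pair_if_greatest[OF order vertices(1-3)])
  qed
qed

lemma mvar_triple_eq_add_pair:
  assumes "mvar p1 + mvar p2 + mvar p3 = w + (mvar x + mvar y)"
  shows "x \<in> {p1, p2, p3}" "y \<in> {p1, p2, p3}"
proof -
  have "Poly_Mapping.lookup (mvar p1 + mvar p2 + mvar p3) v = Poly_Mapping.lookup (w + (mvar x + mvar y)) v"
    for v
    using assms by simp
  from this[of x] this[of y] show "x \<in> {p1, p2, p3}" "y \<in> {p1, p2, p3}"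
    by (auto simp: lookup_add lookup_mvar split: if_splits)
qed

lemma keys_monom_mult: "Poly_Mapping.keys (Poly_Mapping.single X c * f) \<subseteq> (+) X ` Poly_Mapping.keys f"
  using keys_mult[of "Poly_Mapping.single X c" f] by (auto split: if_splits)

lemma reduces_to_zero_two_minorsI:
  fixes f :: "'k::comm_ring_1 pol"
  assumes order: "P_order P lt"
    and inner: "inner_interval P (x1, y1) (x2, y2)" "inner_interval P (x3, y3) (x4, y4)"
    and mons: "X1 \<in> mons P" "X2 \<in> mons P"
    and f: "f = Poly_Mapping.single X1 c1 * fmin (x1, y1) (x2, y2) + Poly_Mapping.single X2 c2 * fmin (x3, y3) (x4, y4)"
    and bound1: "\<forall>u\<in>Poly_Mapping.keys (fmin (x1, y1) (x2, y2) :: 'k pol). lex_le lt (X1 + u) (lead_mon lt f)"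
    and bound2: "\<forall>u\<in>Poly_Mapping.keys (fmin (x3, y3) (x4, y4) :: 'k pol). lex_le lt (X2 + u) (lead_mon lt f)"
  shows "reduces_to_zero P lt (inner_minors P) f"
proof (rule reduces_to_zero_pairI[OF order _ _ _ _ _ _ f])
  show "fmin (x1, y1) (x2, y2) \<in> inner_minors P" "fmin (x3, y3) (x4, y4) \<in> inner_minors P"
    using inner by (simp_all add: fmin_in_inner_minors)
  show "in_S P (Poly_Mapping.single X1 c1)" "in_S P (Poly_Mapping.single X2 c2)"
    using mons by (simp_all add: in_S_monom)
  show "in_S P (fmin (x1, y1) (x2, y2))" "in_S P (fmin (x3, y3) (x4, y4))"
    using inner by (simp_all add: in_S_fmin)
  show "\<forall>u\<in>Poly_Mapping.keys (Poly_Mapping.single X1 c1 * fmin (x1, y1) (x2, y2))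
      \<union> Poly_Mapping.keys (Poly_Mapping.single X2 c2 * fmin (x3, y3) (x4, y4)). lex_le lt u (lead_mon lt f)"
    using keys_monom_mult[of X1 c1 "fmin (x1, y1) (x2, y2)"] keys_monom_mult[of X2 c2 "fmin (x3, y3) (x4, y4)"]
      bound1 bound2 by blast
qed

section \<open>Two nested inner intervals\<close>

text \<open>In the notation of the theorem a = (i,j), b = (k,l), \<delta> = (m,n), \<alpha> = (i,n), \<beta> = (m,l),
  c = (i,l), d = (k,j), h = (m,j), r = (k,n); M1 and M2 are the two terms of the S-polynomial.\<close>

locale nested_inner_intervals =
  fixes P :: "vert set" and lt :: "vert \<Rightarrow> vert \<Rightarrow> bool" and i j k l m n :: int
  assumes order: "P_order P lt" and inner: "inner_interval P (i, j) (k, l)"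
    and bounds: "i < m" "m < k" "j < n" "n < l"
begin

abbreviation M1 :: mon where "M1 \<equiv> mvar (k, j) + mvar (i, n) + mvar (m, l)"
abbreviation M2 :: mon where "M2 \<equiv> mvar (m, n) + mvar (i, j) + mvar (k, l)"

lemma grid_vertices: "x \<in> {i, m, k} \<Longrightarrow> y \<in> {j, n, l} \<Longrightarrow> (x, y) \<in> vertices P"
  using bounds by (auto intro!: inner_interval_vertices[OF inner])

lemma inner_subintervals:
  "inner_interval P (i, j) (m, n)" "inner_interval P (m, j) (k, l)" "inner_interval P (m, n) (k, l)"
  "inner_interval P (i, j) (k, n)" "inner_interval P (i, n) (m, l)"
  using bounds by (auto intro: inner_interval_mono[OF inner])

lemma M1_neq_M2: "M1 \<noteq> M2"
proof
  assume "M1 = M2"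
  then have "Poly_Mapping.lookup M1 (k, j) = Poly_Mapping.lookup M2 (k, j)"
    by simp
  with bounds show False
    by (simp add: lookup_add lookup_mvar)
qed

lemma M_mons: "M1 \<in> mons P" "M2 \<in> mons P"
  by (simp_all add: grid_vertices)

lemma lead_mons_if_not_coprime:
  assumes "\<not> coprime_mon (lead_mon lt (fmin (i, j) (k, l) :: 'k::comm_ring_1 pol))
    (lead_mon lt (fmin (i, n) (m, l) :: 'k pol))"
  shows "lead_mon lt (fmin (i, j) (k, l) :: 'k pol) = mvar (i, l) + mvar (k, j)"
    and "lead_mon lt (fmin (i, n) (m, l) :: 'k pol) = mvar (i, l) + mvar (m, n)"
proof -
  have keys: "Poly_Mapping.keys (fmin (i, j) (k, l) :: 'k pol) = {mvar (i, j) + mvar (k, l), mvar (i, l) + mvar (k, j)}"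
    "Poly_Mapping.keys (fmin (i, n) (m, l) :: 'k pol) = {mvar (i, n) + mvar (m, l), mvar (i, l) + mvar (m, n)}"
    using bounds by (simp_all add: keys_fmin)
  then have "fmin (i, j) (k, l) \<noteq> (0 :: 'k pol)" "fmin (i, n) (m, l) \<noteq> (0 :: 'k pol)"
    by auto
  then have leads: "lead_mon lt (fmin (i, j) (k, l) :: 'k pol) \<in> Poly_Mapping.keys (fmin (i, j) (k, l) :: 'k pol)"
    "lead_mon lt (fmin (i, n) (m, l) :: 'k pol) \<in> Poly_Mapping.keys (fmin (i, n) (m, l) :: 'k pol)"
    using lead_mon_greatest(1)[OF order in_S_fmin] inner_subintervals(5) inner by blast+
  \<comment> \<open>the diagonal monomial of either minor shares no variable with the other minor\<close>
  have "coprime_mon (mvar (i, j) + mvar (k, l)) Y"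
    if "Y \<in> {mvar (i, n) + mvar (m, l), mvar (i, l) + mvar (m, n)}" for Y
    using that bounds by (auto simp: coprime_mon_def lookup_add lookup_mvar)
  moreover have "coprime_mon X (mvar (i, n) + mvar (m, l))"
    if "X \<in> {mvar (i, j) + mvar (k, l), mvar (i, l) + mvar (k, j)}" for X
    using that bounds by (auto simp: coprime_mon_def lookup_add lookup_mvar)
  ultimately show "lead_mon lt (fmin (i, j) (k, l) :: 'k pol) = mvar (i, l) + mvar (k, j)"
    "lead_mon lt (fmin (i, n) (m, l) :: 'k pol) = mvar (i, l) + mvar (m, n)"
    using assms leads unfolding keys by auto
qed

lemma spoly_eq:
  assumes "lead_mon lt (fmin (i, j) (k, l) :: 'k::field pol) = mvar (i, l) + mvar (k, j)"
    and "lead_mon lt (fmin (i, n) (m, l) :: 'k pol) = mvar (i, l) + mvar (m, n)"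
  shows "spoly lt (fmin (i, j) (k, l)) (fmin (i, n) (m, l)) =
    Poly_Mapping.single M1 1 - Poly_Mapping.single M2 (1 :: 'k)"
proof -
  have coeffs: "lead_coeff lt (fmin (i, j) (k, l) :: 'k pol) = -1" "lead_coeff lt (fmin (i, n) (m, l) :: 'k pol) = -1"
    using assms bounds by (auto intro: lead_coeff_fmin_antidiagonal)
  have "mon_lcm (mvar (i, l) + mvar (k, j)) (mvar (i, l) + mvar (m, n)) = mvar (i, l) + mvar (k, j) + mvar (m, n)"
  proof -
    have "(\<lambda>v. max (Poly_Mapping.lookup (mvar (i, l) + mvar (k, j)) v) (Poly_Mapping.lookup (mvar (i, l) + mvar (m, n)) v))
        = Poly_Mapping.lookup (mvar (i, l) + mvar (k, j) + mvar (m, n))"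
      using bounds by (auto simp: lookup_add lookup_mvar fun_eq_iff)
    then show ?thesis
      unfolding mon_lcm_def by (simp add: lookup_inverse)
  qed
  moreover have "mvar (i, l) + mvar (k, j) + mvar (m, n) - (mvar (i, l) + mvar (m, n)) = mvar (k, j)"
    by (metis add.commute add.left_commute add_diff_cancel_left')
  ultimately show ?thesis
    unfolding spoly_def Let_def assms coeffs
    by (simp add: fmin_eq algebra_simps mult_single single_uminus)
qed

lemma lead_mon_spoly:
  "lex_less lt M1 M2 \<Longrightarrow> lead_mon lt (Poly_Mapping.single M1 1 - Poly_Mapping.single M2 (1::'k::comm_ring_1)) = M2"
  "lex_less lt M2 M1 \<Longrightarrow> lead_mon lt (Poly_Mapping.single M1 1 - Poly_Mapping.single M2 (1::'k)) = M1"
proof -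
  assume "lex_less lt M1 M2"
  then have "lead_mon lt (Poly_Mapping.single M2 1 - Poly_Mapping.single M1 (1::'k)) = M2"
    by (rule lead_mon_binomial[OF order M_mons(2,1)])
  then show "lead_mon lt (Poly_Mapping.single M1 1 - Poly_Mapping.single M2 (1::'k)) = M2"
    by (metis lead_mon_uminus minus_diff_eq)
next
  assume "lex_less lt M2 M1"
  then show "lead_mon lt (Poly_Mapping.single M1 1 - Poly_Mapping.single M2 (1::'k)) = M1"
    using lead_mon_binomial[OF order M_mons] by blast
qed

lemma reduces_to_zero_imp_lex_conditions:
  fixes S :: "'k::idom pol"
  defines "S \<equiv> Poly_Mapping.single M1 1 - Poly_Mapping.single M2 1"
  assumes lead_ab: "lead_mon lt (fmin (i, j) (k, l) :: 'k pol) = mvar (i, l) + mvar (k, j)"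
    and lead_\<alpha>\<beta>: "lead_mon lt (fmin (i, n) (m, l) :: 'k pol) = mvar (i, l) + mvar (m, n)"
    and "reduces_to_zero P lt (inner_minors P) S"
  shows "(lex_less lt M1 M2 \<and> (lex_less lt (mvar (m, j) + mvar (i, n)) (mvar (i, j) + mvar (m, n))
          \<or> lex_less lt (mvar (k, n) + mvar (m, l)) (mvar (m, n) + mvar (k, l))))
    \<or> (lex_less lt M2 M1 \<and> (lex_less lt (mvar (k, n) + mvar (i, j)) (mvar (i, n) + mvar (k, j))
          \<or> lex_less lt (mvar (m, j) + mvar (k, l)) (mvar (k, j) + mvar (m, l))))"
proof -
  have keys: "Poly_Mapping.keys S = {M1, M2}"
    unfolding S_def using M1_neq_M2 by (rule keys_binomial)
  then have S: "in_S P S" "S \<noteq> 0"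
    using M_mons by (auto simp: in_S_iff_keys_mons)
  have diag_neq: "mvar (i, j) + mvar (k, l) \<noteq> mvar (i, l) + mvar (k, j)"
    "mvar (i, n) + mvar (m, l) \<noteq> mvar (i, l) + mvar (m, n)"
    using bounds by (simp_all add: mvar_pair_neq)
  \<comment> \<open>the leading monomial of S is a multiple of the leading monomial of an inner minor,
    whose two corners must then be among the three variables of that monomial\<close>
  from lex_less_total[OF order M_mons M1_neq_M2] show ?thesis
  proof
    assume M: "lex_less lt M1 M2"
    then have lead: "lead_mon lt S = M2"
      unfolding S_def by (rule lead_mon_spoly)
    from reduces_to_zero_inner_minors_lead_mon[OF order assms(4) S] show ?thesis
    proof cases
      case (1 x1 y1 x2 y2 w)
      then have "(x1, y1) \<in> {(m, n), (i, j), (k, l)}" "(x2, y2) \<in> {(m, n), (i, j), (k, l)}"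
        using mvar_triple_eq_add_pair[of "(m, n)" "(i, j)" "(k, l)" w "(x1, y1)" "(x2, y2)"] lead by simp_all
      then consider "(x1, y1, x2, y2) = (i, j, m, n)" | "(x1, y1, x2, y2) = (i, j, k, l)"
        | "(x1, y1, x2, y2) = (m, n, k, l)"
        using 1 bounds by auto
      then show ?thesis
        by cases (use 1 M lead_ab diag_neq in \<open>simp_all add: add.commute\<close>)
    next
      case (2 x1 y1 x2 y2 w)
      then have "(x1, y2) \<in> {(m, n), (i, j), (k, l)}" "(x2, y1) \<in> {(m, n), (i, j), (k, l)}"
        using mvar_triple_eq_add_pair[of "(m, n)" "(i, j)" "(k, l)" w "(x1, y2)" "(x2, y1)"] lead by simp_all
      then show ?thesis
        using 2 bounds by auto
    qed
  next
    assume M: "lex_less lt M2 M1"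
    then have lead: "lead_mon lt S = M1"
      unfolding S_def by (rule lead_mon_spoly)
    from reduces_to_zero_inner_minors_lead_mon[OF order assms(4) S] show ?thesis
    proof cases
      case (1 x1 y1 x2 y2 w)
      then have "(x1, y1) \<in> {(k, j), (i, n), (m, l)}" "(x2, y2) \<in> {(k, j), (i, n), (m, l)}"
        using mvar_triple_eq_add_pair[of "(k, j)" "(i, n)" "(m, l)" w "(x1, y1)" "(x2, y2)"] lead by simp_all
      then have "(x1, y1, x2, y2) = (i, n, m, l)"
        using 1 bounds by auto
      then show ?thesis
        using 1 lead_\<alpha>\<beta> diag_neq by auto
    next
      case (2 x1 y1 x2 y2 w)
      then have "(x1, y2) \<in> {(k, j), (i, n), (m, l)}" "(x2, y1) \<in> {(k, j), (i, n), (m, l)}"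
        using mvar_triple_eq_add_pair[of "(k, j)" "(i, n)" "(m, l)" w "(x1, y2)" "(x2, y1)"] lead by simp_all
      then consider "(x1, y1, x2, y2) = (i, j, k, n)" | "(x1, y1, x2, y2) = (m, j, k, l)"
        using 2 bounds by auto
      then show ?thesis
        by cases (use 2 M in \<open>simp_all add: add.commute\<close>)
    qed
  qed
qed

lemma binomial_eq_via_lower_left_square:
  "Poly_Mapping.single M1 1 - Poly_Mapping.single M2 1 =
    Poly_Mapping.single (mvar (k, l)) (-1) * fmin (i, j) (m, n)
    + Poly_Mapping.single (mvar (i, n)) (-1) * (fmin (m, j) (k, l) :: 'k::comm_ring_1 pol)"
  by (simp add: fmin_eq algebra_simps mult_single single_uminus)

lemma binomial_eq_via_upper_right_square:
  "Poly_Mapping.single M1 1 - Poly_Mapping.single M2 1 =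
    Poly_Mapping.single (mvar (i, j)) (-1) * fmin (m, n) (k, l)
    + Poly_Mapping.single (mvar (m, l)) (-1) * (fmin (i, j) (k, n) :: 'k::comm_ring_1 pol)"
  by (simp add: fmin_eq algebra_simps mult_single single_uminus)

lemma reduces_to_zero_if_lex_conditions:
  fixes S :: "'k::comm_ring_1 pol"
  defines "S \<equiv> Poly_Mapping.single M1 1 - Poly_Mapping.single M2 1"
  assumes "(lex_less lt M1 M2 \<and> (lex_less lt (mvar (m, j) + mvar (i, n)) (mvar (i, j) + mvar (m, n))
          \<or> lex_less lt (mvar (k, n) + mvar (m, l)) (mvar (m, n) + mvar (k, l))))
    \<or> (lex_less lt M2 M1 \<and> (lex_less lt (mvar (k, n) + mvar (i, j)) (mvar (i, n) + mvar (k, j))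
          \<or> lex_less lt (mvar (m, j) + mvar (k, l)) (mvar (k, j) + mvar (m, l))))"
  shows "reduces_to_zero P lt (inner_minors P) S"
proof -
  have mons: "mvar (x, y) \<in> mons P" if "x \<in> {i, m, k}" "y \<in> {j, n, l}" for x y
    using that grid_vertices by simp
  have via_lower_left: "reduces_to_zero P lt (inner_minors P) S"
    if "lex_le lt (mvar (k, l) + (mvar (i, j) + mvar (m, n))) (lead_mon lt S)"
      "lex_le lt (mvar (k, l) + (mvar (i, n) + mvar (m, j))) (lead_mon lt S)"
      "lex_le lt (mvar (i, n) + (mvar (m, j) + mvar (k, l))) (lead_mon lt S)"
      "lex_le lt (mvar (i, n) + (mvar (m, l) + mvar (k, j))) (lead_mon lt S)"
  proof (rule reduces_to_zero_two_minorsI[OF order inner_subintervals(1,2)])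
    show "S = Poly_Mapping.single (mvar (k, l)) (-1) * fmin (i, j) (m, n)
        + Poly_Mapping.single (mvar (i, n)) (-1) * fmin (m, j) (k, l)"
      unfolding S_def by (rule binomial_eq_via_lower_left_square)
  qed (use bounds that mons in \<open>simp_all add: keys_fmin\<close>)
  have via_upper_right: "reduces_to_zero P lt (inner_minors P) S"
    if "lex_le lt (mvar (i, j) + (mvar (m, n) + mvar (k, l))) (lead_mon lt S)"
      "lex_le lt (mvar (i, j) + (mvar (m, l) + mvar (k, n))) (lead_mon lt S)"
      "lex_le lt (mvar (m, l) + (mvar (i, j) + mvar (k, n))) (lead_mon lt S)"
      "lex_le lt (mvar (m, l) + (mvar (i, n) + mvar (k, j))) (lead_mon lt S)"
  proof (rule reduces_to_zero_two_minorsI[OF order inner_subintervals(3,4)])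
    show "S = Poly_Mapping.single (mvar (i, j)) (-1) * fmin (m, n) (k, l)
        + Poly_Mapping.single (mvar (m, l)) (-1) * fmin (i, j) (k, n)"
      unfolding S_def by (rule binomial_eq_via_upper_right_square)
  qed (use bounds that mons in \<open>simp_all add: keys_fmin\<close>)
  have lead: "lex_less lt M1 M2 \<Longrightarrow> lead_mon lt S = M2" "lex_less lt M2 M1 \<Longrightarrow> lead_mon lt S = M1"
    unfolding S_def by (fact lead_mon_spoly)+
  from assms(2) show ?thesis
  proof (elim disjE conjE)
    assume M: "lex_less lt M1 M2" and "lex_less lt (mvar (m, j) + mvar (i, n)) (mvar (i, j) + mvar (m, n))"
    from lex_less_add_right[OF this(2), of "mvar (k, l)"] show ?thesis
      using M by (intro via_lower_left) (simp_all add: lead(1) lex_le_def add_ac)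
  next
    assume M: "lex_less lt M1 M2" and "lex_less lt (mvar (k, n) + mvar (m, l)) (mvar (m, n) + mvar (k, l))"
    from lex_less_add_right[OF this(2), of "mvar (i, j)"] show ?thesis
      using M by (intro via_upper_right) (simp_all add: lead(1) lex_le_def add_ac)
  next
    assume M: "lex_less lt M2 M1" and "lex_less lt (mvar (k, n) + mvar (i, j)) (mvar (i, n) + mvar (k, j))"
    from lex_less_add_right[OF this(2), of "mvar (m, l)"] show ?thesis
      using M by (intro via_upper_right) (simp_all add: lead(2) lex_le_def add_ac)
  next
    assume M: "lex_less lt M2 M1" and "lex_less lt (mvar (m, j) + mvar (k, l)) (mvar (k, j) + mvar (m, l))"
    from lex_less_add_right[OF this(2), of "mvar (i, n)"] show ?thesis
      using M by (intro via_lower_left) (simp_all add: lead(2) lex_le_def add_ac)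
  qed
qed

lemma lex_conditions_iff:
  "lex_less lt (mvar (m, j) + mvar (i, n)) (mvar (i, j) + mvar (m, n)) \<longleftrightarrow>
    (lt (m, j) (i, j) \<and> lt (i, n) (i, j)) \<or> (lt (m, j) (m, n) \<and> lt (i, n) (m, n))"
  "lex_less lt (mvar (k, n) + mvar (m, l)) (mvar (m, n) + mvar (k, l)) \<longleftrightarrow>
    (lt (k, n) (m, n) \<and> lt (m, l) (m, n)) \<or> (lt (k, n) (k, l) \<and> lt (m, l) (k, l))"
  "lex_less lt (mvar (k, n) + mvar (i, j)) (mvar (i, n) + mvar (k, j)) \<longleftrightarrow>
    (lt (k, n) (i, n) \<and> lt (i, j) (i, n)) \<or> (lt (k, n) (k, j) \<and> lt (i, j) (k, j))"
  "lex_less lt (mvar (m, j) + mvar (k, l)) (mvar (k, j) + mvar (m, l)) \<longleftrightarrow>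
    (lt (m, j) (k, j) \<and> lt (k, l) (k, j)) \<or> (lt (m, j) (m, l) \<and> lt (k, l) (m, l))"
  by (rule lex_less_mvar_pair_iff[OF order]; (rule grid_vertices)?; use bounds in simp)+

end

theorem mainTheorem5:
  fixes P :: "vert set" and lt :: "vert \<Rightarrow> vert \<Rightarrow> bool"
    and i j k l m n :: int
  assumes "collection_of_cells P"
    and "i < m" "m < k" "j < n" "n < l"
    and "inner_interval P (i, j) (k, l)"
    and "P_order P lt"
    and "\<not> coprime_mon (lead_mon lt (fmin (i, j) (k, l) :: ('k::field) pol))
                        (lead_mon lt (fmin (i, n) (m, l) :: 'k pol))"
  shows "reduces_to_zero P lt (inner_minors P)
           (spoly lt (fmin (i, j) (k, l)) (fmin (i, n) (m, l)) :: 'k pol)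
    \<longleftrightarrow>
     (let a = (i, j); b = (k, l); \<delta> = (m, n); \<alpha> = (i, n); \<beta> = (m, l);
          d = (k, j); h = (m, j); r = (k, n);
          M1 = mvar d + mvar \<alpha> + mvar \<beta>; M2 = mvar \<delta> + mvar a + mvar b in
      (lex_less lt M1 M2 \<and> ((lt h a \<and> lt \<alpha> a) \<or> (lt h \<delta> \<and> lt \<alpha> \<delta>))) \<or>
      (lex_less lt M1 M2 \<and> ((lt r \<delta> \<and> lt \<beta> \<delta>) \<or> (lt r b \<and> lt \<beta> b))) \<or>
      (lex_less lt M2 M1 \<and> ((lt r \<alpha> \<and> lt a \<alpha>) \<or> (lt r d \<and> lt a d))) \<or>
      (lex_less lt M2 M1 \<and> ((lt h d \<and> lt b d) \<or> (lt h \<beta> \<and> lt b \<beta>))))"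
proof -
  interpret nested_inner_intervals P lt i j k l m n
    using assms(2-7) by unfold_locales
  note leads = lead_mons_if_not_coprime[OF assms(8)]
  show ?thesis
    unfolding spoly_eq[OF leads] Let_def lex_conditions_iff[symmetric]
    using reduces_to_zero_imp_lex_conditions[OF leads] reduces_to_zero_if_lex_conditions
    by blast
qed

end
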